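(* Let $p/q$ be an even rational parameter and $P=2p/(p+q)$. For every tile center $c$, the label assigned to $-c$ by the tile description is obtained from the label assigned to $c$ by swapping N with S and E with W. Equivalently, the tiling produced by $(\Xi_P,X_P)$ is invariant under reflection in the origin.
   Context: An even rational parameter is a rational $p/q\in(0,1)$, $p,q$ positive coprime integers, $pq$ even; $\omega=p+q$, $P=2p/\omega$. Tile centers are the points $(m+\frac12,n+\frac12)$, $m,n\in\mathbb Z$; each is the center of a unit square with edges N, S, E, W. Let $\Lambda_P\subset\mathbb R^3$ be the lattice generated by $(2,P,P),(0,2,0),(0,0,2)$, $X_P=\mathbb R^3/\Lambda_P$ with coordinates $(T,U_1,U_2)$ and fundamental domain $[-1,1]^3$, and $\Xi_P(x,y)=(2Px+2y,2Px,2Px+2Py)\bmod\Lambda_P$. Each fiber $\{T\}\times[-1,1]^2$ is partitioned: given $u_1\le u_2\le u_3$, the lines $U_1=u_i$, $U_2=u_i$ cut $[-1,1]^2$ into a $4\times4$ grid of rectangles indexed by (column $a$, row $b$), columns in increasing $U_1$, rows in increasing $U_2$. Special rectangles with single letters: for $T\in[-1,-1+P]$: $(u_1,u_2,u_3)=(T,1-P,2-P+T)$, W $(4,4)$, N $(1,3)$, E $(2,2)$, S $(3,1)$; for $T\in[-1+P,1-P]$: $(-1+P,T,1-P)$, N $(1,4)$, E $(3,3)$, W $(2,2)$, S $(4,1)$; for $T\in[1-P,1]$: $(-2+P+T,-1+P,T)$, N $(2,4)$, W $(3,3)$, S $(4,2)$, E $(1,1)$. A non-special rectangle gets the unordered pair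 of letters of the special rectangles in its column and in its row; special rectangles get the empty label. The label of a tile center $c$ is the label of the rectangle (in its fiber) whose interior contains the representative of $\Xi_P(c)$ in $[-1,1]^3$ (this is known to be well defined for even rational parameters); a label $\{X,Y\}$ is drawn as a segment joining the midpoints of edges $X$ and $Y$ of the unit square centered at $c$. *)

theory Defs
  imports Complex_Main
begin

datatype edge = N | S | E | W

fun swap_edge :: "edge \<Rightarrow> edge" where
  "swap_edge N = S" | "swap_edge S = N" | "swap_edge E = W" | "swap_edge W = E"

text \<open>Even rational parameter p/q in (0,1), written via positive coprime naturals.\<close>
definition even_rational_param :: "nat \<Rightarrow> nat \<Rightarrow> bool" where
  "even_rational_param p q \<longleftrightarrow> 0 < p \<and> p < q \<and> coprime p q \<and> even (p * q)"

definition param_P :: "nat \<Rightarrow> nat \<Rightarrow> real" where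
  "param_P p q = 2 * real p / real (p + q)"

definition tile_center :: "real \<Rightarrow> real \<Rightarrow> bool" where
  "tile_center x y \<longleftrightarrow> (\<exists>m n :: int. x = of_int m + 1/2 \<and> y = of_int n + 1/2)"

text \<open>Membership of (t,u1,u2) in the lattice generated by (2,P,P),(0,2,0),(0,0,2).\<close>
definition in_Lambda :: "real \<Rightarrow> real \<Rightarrow> real \<Rightarrow> real \<Rightarrow> bool" where
  "in_Lambda P t u1 u2 \<longleftrightarrow>
     (\<exists>a b c :: int. t = 2 * of_int a \<and> u1 = of_int a * P + 2 * of_int b
                     \<and> u2 = of_int a * P + 2 * of_int c)"

text \<open>The map Xi_P (before reduction modulo the lattice).\<close>
definition Xi :: "real \<Rightarrow> real \<Rightarrow> real \<Rightarrow> real \<times> real \<times> real" where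
  "Xi P x y = (2*P*x + 2*y, 2*P*x, 2*P*x + 2*P*y)"

definition fiber_case :: "real \<Rightarrow> real \<Rightarrow> nat \<Rightarrow> bool" where
  "fiber_case P T k \<longleftrightarrow>
     (k = 1 \<and> -1 \<le> T \<and> T \<le> -1 + P) \<or>
     (k = 2 \<and> -1 + P \<le> T \<and> T \<le> 1 - P) \<or>
     (k = 3 \<and> 1 - P \<le> T \<and> T \<le> 1)"

text \<open>Grid boundaries: index 0 is -1, indices 1,2,3 are u1,u2,u3, index 4 is 1.\<close>
definition grid_bnd :: "real \<Rightarrow> real \<Rightarrow> nat \<Rightarrow> nat \<Rightarrow> real" where
  "grid_bnd P T k i =
     (if i = 0 then -1 else if i \<ge> 4 then 1 else
      if k = 1 then (if i = 1 then T else if i = 2 then 1 - P else 2 - P + T)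
      else if k = 2 then (if i = 1 then -1 + P else if i = 2 then T else 1 - P)
      else (if i = 1 then -2 + P + T else if i = 2 then -1 + P else T))"

text \<open>Special rectangles (column a, row b) with their single letters.\<close>
definition special :: "nat \<Rightarrow> nat \<Rightarrow> nat \<Rightarrow> edge option" where
  "special k a b =
     (if k = 1 then
        (if (a,b) = (4,4) then Some W else if (a,b) = (1,3) then Some N
         else if (a,b) = (2,2) then Some E else if (a,b) = (3,1) then Some S else None)
      else if k = 2 then
        (if (a,b) = (1,4) then Some N else if (a,b) = (3,3) then Some E
         else if (a,b) = (2,2) then Some W else if (a,b) = (4,1) then Some S else None)
      else
        (if (a,b) = (2,4) then Some N else if (a,b) = (3,3) then Some W
         else if (a,b) = (4,2) then Some S else if (a,b) = (1,1) then Some E else None))"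

definition rect_label :: "nat \<Rightarrow> nat \<Rightarrow> nat \<Rightarrow> edge set" where
  "rect_label k a b =
     (if special k a b \<noteq> None then {}
      else {X. \<exists>b'\<in>{1..4}. special k a b' = Some X} \<union> {Y. \<exists>a'\<in>{1..4}. special k a' b = Some Y})"

definition in_rect_interior :: "real \<Rightarrow> real \<Rightarrow> nat \<Rightarrow> nat \<Rightarrow> nat \<Rightarrow> real \<Rightarrow> real \<Rightarrow> bool" where
  "in_rect_interior P T k a b U1 U2 \<longleftrightarrow>
     a \<in> {1..4} \<and> b \<in> {1..4} \<and>
     grid_bnd P T k (a - 1) < U1 \<and> U1 < grid_bnd P T k a \<and>
     grid_bnd P T k (b - 1) < U2 \<and> U2 < grid_bnd P T k b"

text \<open>The tile description: the point (x,y) carries label L if some representative of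
  Xi_P(x,y) in [-1,1]^3 lies in the interior of a rectangle (of its fiber) labelled L.\<close>
definition tile_label :: "real \<Rightarrow> real \<Rightarrow> real \<Rightarrow> edge set \<Rightarrow> bool" where
  "tile_label P x y L \<longleftrightarrow>
     (\<exists>T U1 U2. T \<in> {-1..1} \<and> U1 \<in> {-1..1} \<and> U2 \<in> {-1..1} \<and>
        (case Xi P x y of (t, v1, v2) \<Rightarrow> in_Lambda P (T - t) (U1 - v1) (U2 - v2)) \<and>
        (\<exists>k a b. fiber_case P T k \<and> in_rect_interior P T k a b U1 U2 \<and> L = rect_label k a b))"

end

theory Submission
  imports Defs
begin

text \<open>Reflection in the origin negates \<open>\<Xi>\<^sub>P\<close>, preserves \<open>\<Lambda>\<^sub>P\<close> and \<open>[-1,1]\<^sup>3\<close>, and maps the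
  fiber partition over \<open>T\<close> onto the one over \<open>-T\<close>: regime \<open>k\<close> becomes regime \<open>4 - k\<close>, and
  rectangle \<open>(a, b)\<close> becomes \<open>(5 - a, 5 - b)\<close>. The special letters are permuted by the swap
  \<open>N \<leftrightarrow> S\<close>, \<open>E \<leftrightarrow> W\<close>, hence so are all labels. Nothing about \<open>P\<close> beyond the definitions is
  used, so the symmetry holds for every parameter and every point.\<close>

lemma swap_edge_swap_edge [simp]: "swap_edge (swap_edge e) = e"
  by (cases e) auto

lemma in_Lambda_uminus: "in_Lambda P t u1 u2 \<Longrightarrow> in_Lambda P (- t) (- u1) (- u2)"
  unfolding in_Lambda_def
  by (elim exE, rule_tac x = "- a" in exI, rule_tac x = "- b" in exI, rule_tac x = "- c" in exI)
     (simp add: algebra_simps)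

lemma Xi_uminus: "Xi P (- x) (- y) = (case Xi P x y of (t, v1, v2) \<Rightarrow> (- t, - v1, - v2))"
  by (simp add: Xi_def)

lemma fiber_case_uminus: "fiber_case P T k \<Longrightarrow> fiber_case P (- T) (4 - k)"
  unfolding fiber_case_def by auto

lemma fiber_case_regime: "fiber_case P T k \<Longrightarrow> k \<in> {1, 2, 3}"
  unfolding fiber_case_def by auto

lemma grid_bnd_uminus:
  assumes "k \<in> {1, 2, 3}" "i \<le> 4"
  shows "grid_bnd P (- T) (4 - k) (4 - i) = - grid_bnd P T k i"
proof -
  have "k = 1 \<or> k = 2 \<or> k = 3" "i = 0 \<or> i = 1 \<or> i = 2 \<or> i = 3 \<or> i = 4"
    using assms by auto
  then show ?thesis unfolding grid_bnd_def by (elim disjE) simp_all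
qed

lemma in_rect_interior_uminus:
  assumes k: "k \<in> {1, 2, 3}" and rect: "in_rect_interior P T k a b U1 U2"
  shows "in_rect_interior P (- T) (4 - k) (5 - a) (5 - b) (- U1) (- U2)"
proof -
  have ab: "a \<in> {1..4}" "b \<in> {1..4}"
    using rect unfolding in_rect_interior_def by auto
  have lower: "grid_bnd P (- T) (4 - k) (5 - i - 1) = - grid_bnd P T k i" if "i \<in> {1..4}" for i
    using grid_bnd_uminus[OF k, of i] that by (simp add: diff_diff_add)
  have upper: "grid_bnd P (- T) (4 - k) (5 - i) = - grid_bnd P T k (i - 1)" if "i \<in> {1..4}" for i
  proof -
    have "5 - i = 4 - (i - 1)" using that by auto
    then show ?thesis using that by (simp only:) (rule grid_bnd_uminus[OF k], use that in auto)
  qed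
  show ?thesis
    using rect ab unfolding in_rect_interior_def lower[OF ab(1)] lower[OF ab(2)]
      upper[OF ab(1)] upper[OF ab(2)] by auto
qed

lemma special_uminus:
  assumes "k \<in> {1, 2, 3}" "a \<in> {1..4}" "b \<in> {1..4}"
  shows "special (4 - k) (5 - a) (5 - b) = map_option swap_edge (special k a b)"
proof -
  have "k = 1 \<or> k = 2 \<or> k = 3" "a = 1 \<or> a = 2 \<or> a = 3 \<or> a = 4" "b = 1 \<or> b = 2 \<or> b = 3 \<or> b = 4"
    using assms by auto
  then show ?thesis unfolding special_def by (elim disjE) simp_all
qed

lemma letters_reindex_swap:
  assumes "\<And>i. i \<in> {1..4::nat} \<Longrightarrow> g (5 - i) = map_option swap_edge (f i)"
  shows "{X. \<exists>i\<in>{1..4}. g i = Some X} = swap_edge ` {X. \<exists>i\<in>{1..4}. f i = Some X}"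
proof (intro set_eqI iffI)
  fix X assume "X \<in> {X. \<exists>i\<in>{1..4}. g i = Some X}"
  then obtain i where i: "i \<in> {1..4}" "g i = Some X" by auto
  have j: "5 - i \<in> {1..4}" "5 - (5 - i) = i" using i(1) by auto
  have "map_option swap_edge (f (5 - i)) = Some X" using assms[OF j(1)] j(2) i(2) by simp
  then have "f (5 - i) = Some (swap_edge X)" by (auto simp: map_option_eq_Some)
  with j(1) have "swap_edge X \<in> {X. \<exists>i\<in>{1..4}. f i = Some X}" by blast
  then show "X \<in> swap_edge ` {X. \<exists>i\<in>{1..4}. f i = Some X}"
    by (metis image_eqI swap_edge_swap_edge)
next
  fix X assume "X \<in> swap_edge ` {X. \<exists>i\<in>{1..4}. f i = Some X}"
  then obtain i where "i \<in> {1..4}" "f i = Some (swap_edge X)" by auto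
  with assms[of i] show "X \<in> {X. \<exists>i\<in>{1..4}. g i = Some X}" by force
qed

lemma rect_label_uminus:
  assumes k: "k \<in> {1, 2, 3}" and ab: "a \<in> {1..4}" "b \<in> {1..4}"
  shows "rect_label (4 - k) (5 - a) (5 - b) = swap_edge ` rect_label k a b"
proof -
  have column: "{X. \<exists>i\<in>{1..4}. special (4 - k) (5 - a) i = Some X}
      = swap_edge ` {X. \<exists>i\<in>{1..4}. special k a i = Some X}"
    by (rule letters_reindex_swap) (simp add: special_uminus[OF k ab(1)])
  have row: "{X. \<exists>i\<in>{1..4}. special (4 - k) i (5 - b) = Some X}
      = swap_edge ` {X. \<exists>i\<in>{1..4}. special k i b = Some X}"
    by (rule letters_reindex_swap) (simp add: special_uminus[OF k _ ab(2)])
  have "special (4 - k) (5 - a) (5 - b) = None \<longleftrightarrow> special k a b = None"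
    using special_uminus[OF k ab] by simp
  with column row show ?thesis
    unfolding rect_label_def by (simp add: image_Un)
qed

lemma tile_label_uminus:
  assumes "tile_label P x y L"
  shows "tile_label P (- x) (- y) (swap_edge ` L)"
proof -
  obtain T U1 U2 k a b where box: "T \<in> {-1..1}" "U1 \<in> {-1..1}" "U2 \<in> {-1..1}"
    and lattice: "case Xi P x y of (t, v1, v2) \<Rightarrow> in_Lambda P (T - t) (U1 - v1) (U2 - v2)"
    and fiber: "fiber_case P T k" and rect: "in_rect_interior P T k a b U1 U2"
    and L: "L = rect_label k a b"
    using assms unfolding tile_label_def by auto
  have k: "k \<in> {1, 2, 3}" using fiber_case_regime[OF fiber] .
  have ab: "a \<in> {1..4}" "b \<in> {1..4}" using rect unfolding in_rect_interior_def by auto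
  have "case Xi P (- x) (- y) of (t, v1, v2) \<Rightarrow> in_Lambda P (- T - t) (- U1 - v1) (- U2 - v2)"
    using lattice unfolding Xi_uminus by (auto split: prod.splits dest: in_Lambda_uminus)
  moreover have "swap_edge ` L = rect_label (4 - k) (5 - a) (5 - b)"
    using rect_label_uminus[OF k ab] L by simp
  ultimately show ?thesis
    unfolding tile_label_def using box fiber_case_uminus[OF fiber] in_rect_interior_uminus[OF k rect]
    by (intro exI[of _ "- T"] exI[of _ "- U1"] exI[of _ "- U2"]) auto
qed

lemma tile_label_uminus_iff:
  "tile_label P (- x) (- y) (swap_edge ` L) \<longleftrightarrow> tile_label P x y L"
proof
  assume "tile_label P (- x) (- y) (swap_edge ` L)"
  from tile_label_uminus[OF this] show "tile_label P x y L"
    by (simp add: image_comp comp_def)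
qed (rule tile_label_uminus)

theorem lemma3p4:
  fixes p q :: nat and x y :: real and L :: "edge set"
  assumes "even_rational_param p q"
    and "tile_center x y"
  shows "tile_label (param_P p q) (-x) (-y) (swap_edge ` L) \<longleftrightarrow> tile_label (param_P p q) x y L"
  by (rule tile_label_uminus_iff)

end
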